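(* Let $G$ be a closed, connected, self adjoint, noncompact subgroup of $GL(n,\mathbb{R})$ and let $v\in\mathbb{R}^n$ be nonzero. Then $\lambda^-(v)\ge -M(v)$.
   Context: $\langle A,B\rangle=\mathrm{trace}(AB^t)$, $|A|^2=\langle A,A\rangle$. $\mathfrak{G}$ is the Lie algebra of $G$, $\mathfrak{K}$ and $\mathfrak{P}$ its skew-symmetric and symmetric elements, $\mathfrak{G}_v=\{X\in\mathfrak{G}:X(v)=0\}$, $\widetilde{\mathfrak{P}_v}=(\mathfrak{K}+\mathfrak{G}_v)^\perp$ in $\mathfrak{G}$. For nonzero $X\in\mathfrak{P}$: $\lambda_X(v)$ (resp. $\mu_X(v)$) is the largest (resp. smallest) eigenvalue $\lambda$ of $X$ such that $v$ has a nonzero component in the $\lambda$-eigenspace of $X$. $\lambda^-(v)=\inf\{\lambda_X(v):X\in\widetilde{\mathfrak{P}_v},|X|=1\}$ (with $\inf\emptyset=+\infty$), and the Hilbert–Mumford function is $M(v)=\sup\{\mu_X(v):X\in\mathfrak{P},|X|=1\}$. *)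

theory Defs
  imports "HOL-Analysis.Analysis"
begin

primrec mpow :: "real^'n^'n \<Rightarrow> nat \<Rightarrow> real^'n^'n" where
  "mpow X 0 = mat 1"
| "mpow X (Suc k) = X ** mpow X k"

definition mexp :: "real^'n^'n \<Rightarrow> real^'n^'n" where
  "mexp X = (\<Sum>k. (1 / fact k) *\<^sub>R mpow X k)"

definition minner :: "real^'n^'n \<Rightarrow> real^'n^'n \<Rightarrow> real" where
  "minner A B = trace (A ** transpose B)"

definition mnorm :: "real^'n^'n \<Rightarrow> real" where
  "mnorm A = sqrt (minner A A)"

definition GL_subgroup :: "(real^'n^'n) set \<Rightarrow> bool" where
  "GL_subgroup G \<longleftrightarrow> G \<subseteq> {A. invertible A} \<and> mat 1 \<in> G
     \<and> (\<forall>A\<in>G. \<forall>B\<in>G. A ** B \<in> G) \<and> (\<forall>A\<in>G. matrix_inv A \<in> G)"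

definition lie_alg :: "(real^'n^'n) set \<Rightarrow> (real^'n^'n) set" where
  "lie_alg G = {X. \<forall>t::real. mexp (t *\<^sub>R X) \<in> G}"

definition lie_K :: "(real^'n^'n) set \<Rightarrow> (real^'n^'n) set" where
  "lie_K G = {X \<in> lie_alg G. transpose X = - X}"

definition lie_P :: "(real^'n^'n) set \<Rightarrow> (real^'n^'n) set" where
  "lie_P G = {X \<in> lie_alg G. transpose X = X}"

definition lie_stab :: "(real^'n^'n) set \<Rightarrow> real^'n \<Rightarrow> (real^'n^'n) set" where
  "lie_stab G v = {X \<in> lie_alg G. X *v v = 0}"

definition P_tilde :: "(real^'n^'n) set \<Rightarrow> real^'n \<Rightarrow> (real^'n^'n) set" where
  "P_tilde G v = {X \<in> lie_alg G. \<forall>K\<in>lie_K G. \<forall>H\<in>lie_stab G v. minner X (K + H) = 0}"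

definition eigenspace :: "real^'n^'n \<Rightarrow> real \<Rightarrow> (real^'n) set" where
  "eigenspace X l = {w. X *v w = l *\<^sub>R w}"

text \<open>Eigenvalues l of X such that v has nonzero component (orthogonal projection)
  in the l-eigenspace of X.\<close>
definition supp_eig :: "real^'n^'n \<Rightarrow> real^'n \<Rightarrow> real set" where
  "supp_eig X v = {l. (\<exists>w. w \<noteq> 0 \<and> X *v w = l *\<^sub>R w) \<and> closest_point (eigenspace X l) v \<noteq> 0}"

definition lambda_X :: "real^'n^'n \<Rightarrow> real^'n \<Rightarrow> real" where
  "lambda_X X v = Max (supp_eig X v)"

definition mu_X :: "real^'n^'n \<Rightarrow> real^'n \<Rightarrow> real" where
  "mu_X X v = Min (supp_eig X v)"

definition lambda_minus :: "(real^'n^'n) set \<Rightarrow> real^'n \<Rightarrow> ereal" where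
  "lambda_minus G v = Inf {ereal (lambda_X X v) | X. X \<in> P_tilde G v \<and> mnorm X = 1}"

definition HM :: "(real^'n^'n) set \<Rightarrow> real^'n \<Rightarrow> ereal" where
  "HM G v = Sup {ereal (mu_X X v) | X. X \<in> lie_P G \<and> mnorm X = 1}"

end

theory Submission
  imports Defs
begin

text \<open>
  Let X be a unit vector of the perpendicular space P_tilde G v.  Because G is
  closed under transposition, X - X^t is a skew-symmetric element of the Lie algebra, and X is
  orthogonal to it; this forces X to be symmetric.  Hence -X is a unit vector of the symmetric
  part lie_P G, and since negating a symmetric matrix negates its spectrum,
  mu_{-X}(v) = - lambda_X(v).  Therefore -lambda_X(v) <= M(v) for every admissible X, which is
  the claim lambda^-(v) >= -M(v).
\<close>

section \<open>The Lie product formula in a Banach algebra\<close>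

text \<open>exp (n x) = (exp x)^n needs no commutativity: x commutes with its own multiples.\<close>
lemma exp_of_nat_mult_algebra:
  fixes x :: "'a::{real_normed_algebra_1,banach}"
  shows "exp (of_nat n * x) = exp x ^ n"
proof (induction n)
  case 0 then show ?case by simp
next
  case (Suc n)
  have "of_nat (Suc n) * x = x + of_nat n * x" by (simp add: distrib_right)
  moreover have "x * (of_nat n * x) = (of_nat n * x) * x"
    by (metis mult.assoc mult_of_nat_commute)
  ultimately show ?case using Suc by (simp add: exp_add_commuting)
qed

lemma exp_root_power:
  fixes Z :: "'a::{real_normed_algebra_1,banach}"
  shows "exp (inverse (real (Suc k)) *\<^sub>R Z) ^ Suc k = exp Z"
proof -
  have "of_nat n * (c *\<^sub>R Z) = (real n * c) *\<^sub>R Z" for n c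
    by (simp add: scaleR_conv_of_real mult.assoc[symmetric])
  then have "of_nat (Suc k) * (inverse (real (Suc k)) *\<^sub>R Z) = Z"
    by (simp del: of_nat_Suc)
  then show ?thesis by (metis exp_of_nat_mult_algebra)
qed

text \<open>Telescoping estimate for the difference of two powers in a normed algebra.\<close>
lemma norm_power_diff_le:
  fixes P Q :: "'a::real_normed_algebra_1"
  assumes "norm P \<le> c" "norm Q \<le> c"
  shows "norm (P ^ Suc n - Q ^ Suc n) \<le> real (Suc n) * norm (P - Q) * c ^ n"
proof (induction n)
  case 0 then show ?case by simp
next
  case (Suc n)
  have c0: "0 \<le> c" using assms(1) norm_ge_zero order_trans by blast
  have split: "P ^ Suc (Suc n) - Q ^ Suc (Suc n) = P * (P ^ Suc n - Q ^ Suc n) + (P - Q) * Q ^ Suc n"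
    by (simp add: algebra_simps)
  have "norm (P * (P ^ Suc n - Q ^ Suc n)) \<le> c * (real (Suc n) * norm (P - Q) * c ^ n)"
    by (rule order_trans[OF norm_mult_ineq]) (intro mult_mono assms Suc, auto simp: c0)
  moreover have "norm ((P - Q) * Q ^ Suc n) \<le> norm (P - Q) * c ^ Suc n"
  proof -
    have "norm (Q ^ Suc n) \<le> c ^ Suc n"
      by (rule order_trans[OF norm_power_ineq]) (intro power_mono assms, simp)
    then show ?thesis
      using norm_mult_ineq[of "P - Q" "Q ^ Suc n"] mult_left_mono[of _ _ "norm (P - Q)"]
      by (meson norm_ge_zero order_trans)
  qed
  ultimately have "norm (P ^ Suc (Suc n) - Q ^ Suc (Suc n)) \<le>
      c * (real (Suc n) * norm (P - Q) * c ^ n) + norm (P - Q) * c ^ Suc n"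
    unfolding split by (metis add_mono norm_triangle_ineq order_trans)
  also have "\<dots> = real (Suc (Suc n)) * norm (P - Q) * c ^ Suc n"
    by (simp add: algebra_simps)
  finally show ?case .
qed

lemma exp_product_first_order:
  fixes A B :: "'a::{real_normed_algebra_1,banach}"
  shows "((\<lambda>t. norm (exp (t *\<^sub>R A) * exp (t *\<^sub>R B) - exp (t *\<^sub>R (A + B))) / \<bar>t\<bar>) \<longlongrightarrow> 0) (at 0)"
proof -
  define f where "f \<equiv> \<lambda>t::real. exp (t *\<^sub>R A) * exp (t *\<^sub>R B) - exp (t *\<^sub>R (A + B))"
  have "(f has_vector_derivative
      (exp (0 *\<^sub>R A) * (exp (0 *\<^sub>R B) * B) + (exp (0 *\<^sub>R A) * A) * exp (0 *\<^sub>R B)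
        - exp (0 *\<^sub>R (A + B)) * (A + B))) (at 0)"
    unfolding f_def
    by (intro has_vector_derivative_diff has_vector_derivative_mult exp_scaleR_has_vector_derivative_right)
  then have "(f has_derivative (\<lambda>x. 0)) (at 0)"
    by (simp add: algebra_simps has_vector_derivative_def)
  then have "((\<lambda>y. norm (f y - f 0 - 0) / norm (y - 0)) \<longlongrightarrow> 0) (at 0)"
    by (simp add: has_derivative_iff_norm)
  moreover have "f 0 = 0" by (simp add: f_def)
  ultimately show ?thesis by (simp add: f_def)
qed

lemma lie_product_error:
  fixes A B :: "'a::{real_normed_algebra_1,banach}" and k :: nat
  defines "h \<equiv> inverse (real (Suc k))"
  shows "norm ((exp (h *\<^sub>R A) * exp (h *\<^sub>R B)) ^ Suc k - exp (A + B))
    \<le> exp (norm A + norm B) * (norm (exp (h *\<^sub>R A) * exp (h *\<^sub>R B) - exp (h *\<^sub>R (A + B))) / \<bar>h\<bar>)"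
proof -
  define P where "P = exp (h *\<^sub>R A) * exp (h *\<^sub>R B)"
  define Q where "Q = exp (h *\<^sub>R (A + B))"
  define c where "c = exp (h * (norm A + norm B))"
  have hpos: "h > 0" by (simp add: h_def)
  have nP: "norm P \<le> c"
  proof -
    have "norm P \<le> norm (exp (h *\<^sub>R A)) * norm (exp (h *\<^sub>R B))"
      unfolding P_def by (rule norm_mult_ineq)
    also have "\<dots> \<le> exp (norm (h *\<^sub>R A)) * exp (norm (h *\<^sub>R B))"
      by (intro mult_mono norm_exp) auto
    also have "\<dots> = c" using hpos by (simp add: c_def exp_add[symmetric] algebra_simps)
    finally show ?thesis .
  qed
  have nQ: "norm Q \<le> c"
  proof -
    have "norm Q \<le> exp (norm (h *\<^sub>R (A + B)))" unfolding Q_def by (rule norm_exp)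
    also have "\<dots> \<le> c" using hpos unfolding c_def
      by (simp add: norm_triangle_ineq mult_left_mono)
    finally show ?thesis .
  qed
  have c_pow: "c ^ k \<le> exp (norm A + norm B)"
  proof -
    have "c ^ k \<le> c ^ Suc k"
      by (rule power_increasing) (auto simp: c_def hpos less_imp_le)
    also have "c ^ Suc k = exp (real (Suc k) * (h * (norm A + norm B)))"
      unfolding c_def by (simp only: exp_of_nat_mult[symmetric] of_nat_id)
    also have "real (Suc k) * (h * (norm A + norm B)) = norm A + norm B"
      by (simp add: h_def)
    finally show ?thesis .
  qed
  have "Q ^ Suc k = exp (A + B)" unfolding Q_def h_def by (rule exp_root_power)
  then have "norm (P ^ Suc k - exp (A + B)) \<le> real (Suc k) * norm (P - Q) * c ^ k"
    using norm_power_diff_le[OF nP nQ, of k] by (simp only:)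
  also have "\<dots> \<le> real (Suc k) * norm (P - Q) * exp (norm A + norm B)"
    by (intro mult_left_mono c_pow) auto
  also have "real (Suc k) * norm (P - Q) = norm (P - Q) / \<bar>h\<bar>"
    using hpos by (simp add: h_def divide_inverse del: of_nat_Suc)
  finally show ?thesis by (simp add: P_def Q_def mult.commute)
qed

lemma lie_product_formula:
  fixes A B :: "'a::{real_normed_algebra_1,banach}"
  shows "(\<lambda>k. (exp (inverse (real (Suc k)) *\<^sub>R A) * exp (inverse (real (Suc k)) *\<^sub>R B)) ^ Suc k)
           \<longlonglongrightarrow> exp (A + B)"
proof -
  define h where "h \<equiv> \<lambda>k::nat. inverse (real (Suc k))"
  define e where "e \<equiv> \<lambda>t::real. norm (exp (t *\<^sub>R A) * exp (t *\<^sub>R B) - exp (t *\<^sub>R (A + B))) / \<bar>t\<bar>"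
  have "filterlim h (at 0) sequentially"
    unfolding filterlim_at h_def using LIMSEQ_inverse_real_of_nat by auto
  then have "(\<lambda>k. e (h k)) \<longlonglongrightarrow> 0"
    using filterlim_compose[OF exp_product_first_order[of A B, folded e_def]] by blast
  then have "(\<lambda>k. exp (norm A + norm B) * e (h k)) \<longlonglongrightarrow> 0"
    by (rule tendsto_mult_right_zero)
  then have "(\<lambda>k. (exp (h k *\<^sub>R A) * exp (h k *\<^sub>R B)) ^ Suc k - exp (A + B)) \<longlonglongrightarrow> 0"
    by (rule Lim_null_comparison[rotated])
      (intro always_eventually allI, unfold h_def e_def, rule lie_product_error)
  then show ?thesis unfolding h_def by (rule LIM_zero_cancel)
qed

section \<open>Matrices as elements of a Banach algebra\<close>

text \<open>
  The bounded linear maps of a Euclidean space carry a normed vector space structure in the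
  library but no multiplication.  A copy of that type, with composition as product, is a
  real Banach algebra, so the general exponential exp of the library is available on it.
\<close>
typedef (overloaded) 'a endo = "UNIV :: ('a::euclidean_space \<Rightarrow>\<^sub>L 'a) set"
  morphisms Rep_endo Abs_endo by simp

setup_lifting type_definition_endo

instantiation endo :: (euclidean_space) real_normed_vector
begin

lift_definition norm_endo :: "'a endo \<Rightarrow> real" is norm .
lift_definition minus_endo :: "'a endo \<Rightarrow> 'a endo \<Rightarrow> 'a endo" is "(-)" .
lift_definition uminus_endo :: "'a endo \<Rightarrow> 'a endo" is "uminus" .
lift_definition zero_endo :: "'a endo" is 0 .
lift_definition plus_endo :: "'a endo \<Rightarrow> 'a endo \<Rightarrow> 'a endo" is "(+)" .
lift_definition scaleR_endo :: "real \<Rightarrow> 'a endo \<Rightarrow> 'a endo" is scaleR .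

definition dist_endo :: "'a endo \<Rightarrow> 'a endo \<Rightarrow> real"
  where "dist_endo a b = norm (a - b)"

definition uniformity_endo :: "('a endo \<times> 'a endo) filter"
  where "uniformity_endo = (INF e\<in>{0 <..}. principal {(x, y). dist x y < e})"

definition open_endo :: "'a endo set \<Rightarrow> bool"
  where "open_endo S = (\<forall>x\<in>S. \<forall>\<^sub>F (x', y) in uniformity. x' = x \<longrightarrow> y \<in> S)"

definition sgn_endo :: "'a endo \<Rightarrow> 'a endo"
  where "sgn_endo x = scaleR (inverse (norm x)) x"

instance
  apply standard
  unfolding dist_endo_def open_endo_def sgn_endo_def uniformity_endo_def
  apply (rule refl | (transfer, force simp: norm_triangle_ineq algebra_simps))+
  done
end

lemma norm_Rep_endo: "norm (Rep_endo x) = norm x" by transfer simp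
lemma Rep_endo_diff: "Rep_endo (x - y) = Rep_endo x - Rep_endo y" by transfer simp

instance endo :: (euclidean_space) banach
proof
  fix X :: "nat \<Rightarrow> 'a endo"
  assume "Cauchy X"
  then have "Cauchy (\<lambda>n. Rep_endo (X n))"
    unfolding Cauchy_def dist_norm by (simp add: Rep_endo_diff[symmetric] norm_Rep_endo)
  then obtain L where L: "(\<lambda>n. Rep_endo (X n)) \<longlonglongrightarrow> L"
    using convergent_eq_Cauchy convergent_def by blast
  have "X \<longlonglongrightarrow> Abs_endo L"
    using L unfolding LIMSEQ_iff
    by (metis Abs_endo_inverse Rep_endo_diff UNIV_I norm_Rep_endo)
  then show "convergent X" by (auto simp: convergent_def)
qed

instantiation endo :: (euclidean_space) real_normed_algebra_1
begin
lift_definition one_endo :: "'a endo" is id_blinfun .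
lift_definition times_endo :: "'a endo \<Rightarrow> 'a endo \<Rightarrow> 'a endo" is "(o\<^sub>L)" .
instance
proof
  fix a b c :: "'a endo" and r :: real
  show "a * b * c = a * (b * c)" by transfer (rule blinfun_eqI, simp)
  show "1 * a = a" by transfer (rule blinfun_eqI, simp)
  show "a * 1 = a" by transfer (rule blinfun_eqI, simp)
  show "(a + b) * c = a * c + b * c" by transfer (rule blinfun_eqI, simp add: blinfun.bilinear_simps)
  show "a * (b + c) = a * b + a * c" by transfer (rule blinfun_eqI, simp add: blinfun.bilinear_simps)
  show "(0::'a endo) \<noteq> 1"
  proof
    assume "(0::'a endo) = 1"
    then have "norm (0::'a endo) = norm (1::'a endo)" by simp
    moreover have "norm (1::'a endo) = 1" by transfer simp
    ultimately show False by simp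
  qed
  show "r *\<^sub>R a * b = r *\<^sub>R (a * b)" by transfer (rule blinfun_eqI, simp add: blinfun.bilinear_simps)
  show "a * r *\<^sub>R b = r *\<^sub>R (a * b)" by transfer (rule blinfun_eqI, simp add: blinfun.bilinear_simps)
  show "norm (a * b) \<le> norm a * norm b" by transfer (rule norm_blinfun_compose)
  show "norm (1::'a endo) = 1" by transfer simp
qed
end

definition to_endo :: "real^'n^'n \<Rightarrow> (real^'n) endo" where
  "to_endo A = Abs_endo (Blinfun (\<lambda>x. A *v x))"

definition from_endo :: "(real^'n) endo \<Rightarrow> real^'n^'n" where
  "from_endo e = matrix (blinfun_apply (Rep_endo e))"

lemma Rep_to_endo: "blinfun_apply (Rep_endo (to_endo A)) = (\<lambda>x. A *v x)"
  unfolding to_endo_def by (simp add: Abs_endo_inverse bounded_linear_Blinfun_apply)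

lemma from_to_endo[simp]: "from_endo (to_endo A) = A"
  unfolding from_endo_def Rep_to_endo by simp

lemma to_from_endo[simp]: "to_endo (from_endo e) = e"
proof -
  have "(\<lambda>x. from_endo e *v x) = blinfun_apply (Rep_endo e)"
    unfolding from_endo_def by (rule matrix_vector_mul(3)) (rule blinfun.bounded_linear_right)
  then have "Blinfun (\<lambda>x. from_endo e *v x) = Rep_endo e"
    by (simp add: blinfun_apply_inverse)
  then show ?thesis unfolding to_endo_def by (simp add: Rep_endo_inverse)
qed

lemma to_endo_inj: "to_endo A = to_endo B \<Longrightarrow> A = B"
  by (metis from_to_endo)

lemma to_endo_mult: "to_endo (A ** B) = to_endo A * to_endo B"
proof -
  have "Rep_endo (to_endo (A ** B)) = Rep_endo (to_endo A) o\<^sub>L Rep_endo (to_endo B)"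
    by (rule blinfun_eqI) (simp add: Rep_to_endo matrix_vector_mul_assoc)
  then show ?thesis by (metis Rep_endo_inverse times_endo.rep_eq)
qed

lemma to_endo_one: "to_endo (mat 1) = 1"
proof -
  have "Rep_endo (to_endo (mat 1 :: real^'n^'n)) = id_blinfun"
    by (rule blinfun_eqI) (simp add: Rep_to_endo)
  then show ?thesis by (metis Rep_endo_inverse one_endo.rep_eq)
qed

lemma to_endo_add: "to_endo (A + B) = to_endo A + to_endo B"
proof -
  have "Rep_endo (to_endo (A + B)) = Rep_endo (to_endo A) + Rep_endo (to_endo B)"
    by (rule blinfun_eqI) (simp add: Rep_to_endo blinfun.bilinear_simps matrix_vector_mult_add_rdistrib)
  then show ?thesis by (metis Rep_endo_inverse plus_endo.rep_eq)
qed

lemma to_endo_scaleR: "to_endo (r *\<^sub>R A) = r *\<^sub>R to_endo A"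
proof -
  have "Rep_endo (to_endo (r *\<^sub>R A)) = r *\<^sub>R Rep_endo (to_endo A)"
    by (rule blinfun_eqI) (simp add: Rep_to_endo blinfun.bilinear_simps vec_eq_iff matrix_vector_mult_def sum_distrib_left algebra_simps)
  then show ?thesis by (metis Rep_endo_inverse scaleR_endo.rep_eq)
qed

lemma to_endo_mpow: "to_endo (mpow X k) = to_endo X ^ k"
  by (induction k) (simp_all add: to_endo_one to_endo_mult)

lemma from_endo_entry: "from_endo e $ i $ j = Rep_endo e (axis j 1) $ i"
  by (simp add: from_endo_def matrix_def)

lemma from_endo_add: "from_endo (a + b) = from_endo a + from_endo b"
  by (simp add: vec_eq_iff from_endo_entry plus_endo.rep_eq blinfun.bilinear_simps)

lemma from_endo_scaleR: "from_endo (r *\<^sub>R a) = r *\<^sub>R from_endo a"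
  by (simp add: vec_eq_iff from_endo_entry scaleR_endo.rep_eq blinfun.bilinear_simps)

text \<open>Reading off the matrix of an endomorphism is continuous, since entries are bounded by the norm.\<close>
lemma bounded_linear_from_endo: "bounded_linear (from_endo :: (real^'n) endo \<Rightarrow> real^'n^'n)"
proof (rule bounded_linear_intro[where K = "real (CARD('n)) * real (CARD('n))"])
  fix a b :: "(real^'n) endo" and r :: real
  show "from_endo (a + b) = from_endo a + from_endo b" by (rule from_endo_add)
  show "from_endo (r *\<^sub>R a) = r *\<^sub>R from_endo a" by (rule from_endo_scaleR)
  have ent: "\<bar>from_endo a $ i $ j\<bar> \<le> norm a" for i j
  proof -
    have "\<bar>from_endo a $ i $ j\<bar> \<le> norm (Rep_endo a (axis j 1))"
      unfolding from_endo_entry by (rule component_le_norm_cart)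
    also have "\<dots> \<le> norm (Rep_endo a) * norm (axis j (1::real))" by (rule norm_blinfun)
    also have "\<dots> = norm a" by (simp add: norm_Rep_endo)
    finally show ?thesis .
  qed
  have row: "norm (from_endo a $ i) \<le> real (CARD('n)) * norm a" for i
  proof -
    have "norm (from_endo a $ i) \<le> (\<Sum>j\<in>UNIV. \<bar>from_endo a $ i $ j\<bar>)" by (rule norm_le_l1_cart)
    also have "\<dots> \<le> (\<Sum>j\<in>(UNIV::'n set). norm a)" by (rule sum_mono) (rule ent)
    finally show ?thesis by simp
  qed
  have "norm (from_endo a) \<le> (\<Sum>i\<in>UNIV. norm (from_endo a $ i))"
    unfolding norm_vec_def by (rule L2_set_le_sum) simp
  also have "\<dots> \<le> (\<Sum>i\<in>(UNIV::'n set). real (CARD('n)) * norm a)" by (rule sum_mono) (rule row)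
  finally show "norm (from_endo a) \<le> norm a * (real (CARD('n)) * real (CARD('n)))" by (simp add: algebra_simps)
qed


section \<open>The matrix exponential\<close>

lemma mexp_sums_exp: "(\<lambda>k. (1 / fact k) *\<^sub>R mpow X k) sums from_endo (exp (to_endo X))"
proof -
  have "(\<lambda>k. to_endo X ^ k /\<^sub>R fact k) sums exp (to_endo X)"
    unfolding exp_def using summable_exp_generic by (rule summable_sums)
  from bounded_linear.sums[OF bounded_linear_from_endo this]
  have "(\<lambda>k. from_endo (to_endo X ^ k /\<^sub>R fact k)) sums from_endo (exp (to_endo X))" .
  moreover have "from_endo (to_endo X ^ k /\<^sub>R fact k) = (1 / fact k) *\<^sub>R mpow X k" for k
    by (simp add: from_endo_scaleR to_endo_mpow[symmetric] divide_inverse)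
  ultimately show ?thesis by simp
qed

lemma mexp_eq_exp: "mexp X = from_endo (exp (to_endo X))"
  unfolding mexp_def using mexp_sums_exp by (rule sums_unique[symmetric])

lemma to_endo_mexp: "to_endo (mexp X) = exp (to_endo X)"
  by (simp add: mexp_eq_exp)

lemma mexp_zero: "mexp (0::real^'n^'n) = mat 1"
proof -
  have "to_endo (0::real^'n^'n) = 0" by (metis scale_zero_left to_endo_scaleR)
  then show ?thesis by (metis exp_zero from_to_endo mexp_eq_exp to_endo_one)
qed

text \<open>exp(X) has the inverse exp(-X); in particular every one-parameter subgroup lies in GL(n).\<close>
lemma mexp_invertible: "invertible (mexp X)"
proof -
  have "to_endo (mexp X ** mexp (-X)) = 1" "to_endo (mexp (-X) ** mexp X) = 1"
    by (simp_all add: to_endo_mult to_endo_mexp to_endo_scaleR[of "-1", simplified]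
        exp_add_commuting[symmetric])
  then show ?thesis unfolding invertible_def by (metis to_endo_inj to_endo_one)
qed

lemma mexp_lie_product:
  "(\<lambda>k. mpow (mexp (inverse (real (Suc k)) *\<^sub>R X) ** mexp (inverse (real (Suc k)) *\<^sub>R Y)) (Suc k))
     \<longlonglongrightarrow> mexp (X + Y)"
proof -
  let ?E = "\<lambda>k Z. exp (inverse (real (Suc k)) *\<^sub>R to_endo Z)"
  have "(\<lambda>k. from_endo ((?E k X * ?E k Y) ^ Suc k)) \<longlonglongrightarrow> from_endo (exp (to_endo X + to_endo Y))"
    by (rule bounded_linear.tendsto[OF bounded_linear_from_endo lie_product_formula])
  moreover have "from_endo ((?E k X * ?E k Y) ^ Suc k)
      = mpow (mexp (inverse (real (Suc k)) *\<^sub>R X) ** mexp (inverse (real (Suc k)) *\<^sub>R Y)) (Suc k)" for k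
    by (metis from_to_endo to_endo_mexp to_endo_mpow to_endo_mult to_endo_scaleR)
  moreover have "from_endo (exp (to_endo X + to_endo Y)) = mexp (X + Y)"
    by (simp add: mexp_eq_exp to_endo_add)
  ultimately show ?thesis by simp
qed

lemma mpow_commute: "mpow Z k ** Z = Z ** mpow Z k"
  by (rule to_endo_inj) (simp add: to_endo_mult to_endo_mpow power_commutes)

text \<open>Powers commute with transposition, since a matrix commutes with its powers.\<close>
lemma mpow_transpose: "transpose (mpow Z k) = mpow (transpose Z) k"
proof (induction k)
  case 0 then show ?case by (simp add: transpose_mat)
next
  case (Suc k)
  have "transpose (mpow Z (Suc k)) = transpose (mpow Z k) ** transpose Z"
    by (simp add: matrix_transpose_mul)
  also have "\<dots> = mpow (transpose Z) (Suc k)" using Suc by (simp add: mpow_commute)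
  finally show ?case .
qed

lemma transpose_bounded_linear: "bounded_linear (transpose :: real^'n^'m \<Rightarrow> real^'m^'n)"
proof -
  have "linear (transpose :: real^'n^'m \<Rightarrow> real^'m^'n)"
    by (rule linearI) (simp_all add: transpose_def vec_eq_iff)
  then show ?thesis by (simp add: linear_conv_bounded_linear)
qed

text \<open>Transposition is continuous and linear, so it commutes with the exponential series.\<close>
lemma mexp_transpose: "mexp (transpose Z) = transpose (mexp (Z::real^'n^'n))"
proof -
  have "(\<lambda>k. (1 / fact k) *\<^sub>R mpow Z k) sums mexp Z"
    using mexp_sums_exp[of Z, folded mexp_eq_exp] .
  from bounded_linear.sums[OF transpose_bounded_linear this]
  have "(\<lambda>k. (1 / fact k) *\<^sub>R mpow (transpose Z) k) sums transpose (mexp Z)"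
    by (simp add: transpose_scalar mpow_transpose)
  moreover have "(\<lambda>k. (1 / fact k) *\<^sub>R mpow (transpose Z) k) sums mexp (transpose Z)"
    using mexp_sums_exp[of "transpose Z", folded mexp_eq_exp] .
  ultimately show ?thesis by (rule sums_unique2[symmetric])
qed

section \<open>The Lie algebra of a closed, transpose-closed subgroup\<close>

lemma mpow_in_subgroup:
  assumes "GL_subgroup G" "A \<in> G"
  shows "mpow A k \<in> G"
  using assms by (induction k) (auto simp: GL_subgroup_def)

lemma GL_closed_subgroup_limit:
  assumes "closedin (top_of_set {A :: real^'n^'n. invertible A}) G"
    and "\<And>k. M k \<in> G" "M \<longlonglongrightarrow> L" "invertible L"
  shows "L \<in> G"
proof -
  obtain C where C: "closed C" "G = {A. invertible A} \<inter> C"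
    using assms(1) closedin_closed by blast
  have "L \<in> C" using closed_sequentially[OF C(1) _ assms(3)] assms(2) C(2) by blast
  then show ?thesis using assms(4) C(2) by blast
qed

lemma lie_zero: "GL_subgroup G \<Longrightarrow> 0 \<in> lie_alg G"
  by (simp add: lie_alg_def mexp_zero GL_subgroup_def)

lemma lie_scale: "X \<in> lie_alg G \<Longrightarrow> c *\<^sub>R X \<in> lie_alg G"
  unfolding lie_alg_def by (simp add: scaleR_scaleR)

text \<open>
  The Lie algebra of a closed subgroup is closed under addition: exp(t(X+Y)) is the limit of
  the products (exp(tX/k) exp(tY/k))^k, which lie in G.
\<close>
lemma lie_add:
  fixes G :: "(real^'n^'n) set"
  assumes sg: "GL_subgroup G"
    and cl: "closedin (top_of_set {A :: real^'n^'n. invertible A}) G"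
    and X: "X \<in> lie_alg G" and Y: "Y \<in> lie_alg G"
  shows "X + Y \<in> lie_alg G"
  unfolding lie_alg_def
proof (intro CollectI allI)
  fix t :: real
  let ?M = "\<lambda>k. mexp (inverse (real (Suc k)) *\<^sub>R t *\<^sub>R X) ** mexp (inverse (real (Suc k)) *\<^sub>R t *\<^sub>R Y)"
  have "?M k \<in> G" for k
    using X Y sg unfolding lie_alg_def GL_subgroup_def by (simp add: scaleR_scaleR)
  then have "mpow (?M k) (Suc k) \<in> G" for k
    by (rule mpow_in_subgroup[OF sg])
  moreover have "(\<lambda>k. mpow (?M k) (Suc k)) \<longlonglongrightarrow> mexp (t *\<^sub>R (X + Y))"
    using mexp_lie_product[of "t *\<^sub>R X" "t *\<^sub>R Y"] by (simp add: scaleR_right_distrib)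
  ultimately show "mexp (t *\<^sub>R (X + Y)) \<in> G"
    by (rule GL_closed_subgroup_limit[OF cl _ _ mexp_invertible])
qed

lemma lie_transpose:
  assumes "\<forall>A\<in>G. transpose A \<in> G" "X \<in> lie_alg G"
  shows "transpose X \<in> lie_alg G"
  using assms unfolding lie_alg_def
  by (simp add: transpose_scalar[symmetric] mexp_transpose)

lemma minner_sum: "minner A B = (\<Sum>i\<in>UNIV. \<Sum>j\<in>UNIV. A$i$j * B$i$j)"
  unfolding minner_def trace_def by (simp add: matrix_matrix_mult_def transpose_def)

text \<open>
  A matrix orthogonal to its own skew part X - X^t is symmetric, because
  <X, X - X^t> = |X - X^t|^2 / 2.
\<close>
lemma symmetric_if_orthogonal_to_skew_part:
  fixes X :: "real^'n^'n"
  assumes "minner X (X - transpose X) = 0"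
  shows "transpose X = X"
proof -
  define f where "f = (\<lambda>i j. X$i$j * (X$i$j - X$j$i))"
  have "(\<Sum>i\<in>UNIV. \<Sum>j\<in>UNIV. (X$i$j - X$j$i)\<^sup>2) = (\<Sum>i\<in>UNIV. \<Sum>j\<in>UNIV. f i j + f j i)"
    by (intro sum.cong refl) (simp add: f_def power2_eq_square algebra_simps)
  also have "\<dots> = (\<Sum>i\<in>UNIV. \<Sum>j\<in>UNIV. f i j) + (\<Sum>i\<in>UNIV. \<Sum>j\<in>UNIV. f j i)"
    by (simp add: sum.distrib)
  also have "(\<Sum>i\<in>UNIV. \<Sum>j\<in>UNIV. f j i) = (\<Sum>i\<in>UNIV. \<Sum>j\<in>UNIV. f i j)"
    by (rule sum.swap)
  also have "(\<Sum>i\<in>UNIV. \<Sum>j\<in>UNIV. f i j) = 0"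
    using assms by (simp add: minner_sum f_def transpose_def)
  finally have "(\<Sum>i\<in>UNIV. \<Sum>j\<in>UNIV. (X$i$j - X$j$i)\<^sup>2) = 0" by simp
  then have "\<forall>i. \<forall>j. (X$i$j - X$j$i)\<^sup>2 = 0"
    by (simp add: sum_nonneg sum_nonneg_eq_0_iff)
  then show ?thesis by (simp add: transpose_def vec_eq_iff)
qed

text \<open>
  Every element of P_tilde G v is symmetric: its skew part lies in lie_K G, and
  P_tilde G v is orthogonal to lie_K G (take the stabiliser element 0).
\<close>
lemma P_tilde_symmetric:
  fixes G :: "(real^'n^'n) set"
  assumes sg: "GL_subgroup G"
    and cl: "closedin (top_of_set {A :: real^'n^'n. invertible A}) G"
    and tr: "\<forall>A\<in>G. transpose A \<in> G"
    and X: "X \<in> P_tilde G v"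
  shows "transpose X = X"
proof -
  have XL: "X \<in> lie_alg G" using X by (simp add: P_tilde_def)
  have "X + (-1) *\<^sub>R transpose X \<in> lie_alg G"
    by (intro lie_add[OF sg cl] XL lie_scale lie_transpose[OF tr])
  then have "X - transpose X \<in> lie_K G"
    by (simp add: lie_K_def transpose_def vec_eq_iff)
  moreover have "0 \<in> lie_stab G v" using lie_zero[OF sg] by (simp add: lie_stab_def)
  ultimately have "minner X ((X - transpose X) + 0) = 0"
    using X unfolding P_tilde_def by blast
  then show ?thesis by (intro symmetric_if_orthogonal_to_skew_part) simp
qed

section \<open>Eigenvectors of symmetric matrices\<close>

lemma symmetric_inner:
  fixes X :: "real^'n^'n"
  assumes "transpose X = X"
  shows "(X *v u) \<bullet> w = u \<bullet> (X *v w)"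
  by (metis assms dot_lmul_matrix transpose_matrix_vector)

lemma eigenspace_subspace: "subspace (eigenspace X l)"
  unfolding subspace_def eigenspace_def
  by (auto simp: matrix_vector_right_distrib matrix_vector_mult_scaleR algebra_simps)

text \<open>Eigenvectors of a symmetric matrix for distinct eigenvalues are orthogonal, so there are
  only finitely many eigenvalues.\<close>
lemma symmetric_eigenvalues_finite:
  fixes X :: "real^'n^'n"
  assumes sym: "transpose X = X"
  shows "finite {l. \<exists>w. w \<noteq> 0 \<and> X *v w = l *\<^sub>R w}"
proof -
  define S where "S = {l. \<exists>w. w \<noteq> 0 \<and> X *v w = l *\<^sub>R w}"
  define ev where "ev = (\<lambda>l. SOME w. w \<noteq> 0 \<and> X *v w = l *\<^sub>R w)"
  have evp: "ev l \<noteq> 0 \<and> X *v ev l = l *\<^sub>R ev l" if "l \<in> S" for l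
    using that unfolding S_def ev_def by (metis (mono_tags, lifting) mem_Collect_eq someI)
  have inj: "inj_on ev S"
  proof (rule inj_onI)
    fix l l' assume l: "l \<in> S" and l': "l' \<in> S" and e: "ev l = ev l'"
    have "l *\<^sub>R ev l = l' *\<^sub>R ev l" using evp[OF l] evp[OF l'] e by metis
    then show "l = l'" using evp[OF l] by simp
  qed
  have "pairwise orthogonal (ev ` S)"
    unfolding pairwise_def
  proof (intro ballI impI)
    fix x y assume "x \<in> ev ` S" "y \<in> ev ` S" "x \<noteq> y"
    then obtain l l' where l: "l \<in> S" "x = ev l" and l': "l' \<in> S" "y = ev l'" and "l \<noteq> l'"
      by blast
    have "l * (x \<bullet> y) = (X *v x) \<bullet> y" using evp[OF l(1)] l(2) by simp
    also have "\<dots> = x \<bullet> (X *v y)" by (rule symmetric_inner[OF sym])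
    also have "\<dots> = l' * (x \<bullet> y)" using evp[OF l'(1)] l'(2) by simp
    finally have "(l - l') * (x \<bullet> y) = 0" by (simp add: algebra_simps)
    then show "orthogonal x y" using \<open>l \<noteq> l'\<close> by (simp add: orthogonal_def)
  qed
  moreover have "0 \<notin> ev ` S" using evp by force
  ultimately have "independent (ev ` S)" by (intro pairwise_orthogonal_independent)
  then have "finite (ev ` S)" using independent_bound by blast
  then show ?thesis using inj finite_imageD unfolding S_def by blast
qed

lemma quadratic_form_maximum:
  fixes X :: "real^'n^'n"
  assumes W: "subspace W" and w1: "w1 \<in> W" "w1 \<noteq> 0"
  obtains w0 where "w0 \<in> W" "w0 \<bullet> w0 = 1"
    "\<And>w. w \<in> W \<Longrightarrow> (X *v w) \<bullet> w \<le> ((X *v w0) \<bullet> w0) * (w \<bullet> w)"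
proof -
  define q where "q = (\<lambda>w. (X *v w) \<bullet> w)"
  define K where "K = W \<inter> sphere 0 1"
  have cK: "compact K" unfolding K_def
    using closed_subspace[OF W] compact_sphere by (metis compact_Int_closed inf_commute)
  have "w1 /\<^sub>R norm w1 \<in> K" using w1 W unfolding K_def by (simp add: subspace_scale)
  then have neK: "K \<noteq> {}" by blast
  have cq: "continuous_on K q" unfolding q_def
    by (intro continuous_intros bounded_linear.continuous_on[OF matrix_vector_mul_bounded_linear])
  obtain w0 where w0K: "w0 \<in> K" and w0max: "\<And>y. y \<in> K \<Longrightarrow> q y \<le> q w0"
    using continuous_attains_sup[OF cK neK cq] by blast
  have bound: "q w \<le> q w0 * (w \<bullet> w)" if "w \<in> W" for w
  proof (cases "w = 0")
    case True then show ?thesis by (simp add: q_def)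
  next
    case False
    define c where "c = inverse (norm w)"
    have "c *\<^sub>R w \<in> K" using that False W by (simp add: K_def c_def subspace_scale)
    moreover have "q (c *\<^sub>R w) = c\<^sup>2 * q w"
      by (simp add: q_def matrix_vector_mult_scaleR power2_eq_square)
    ultimately have "c\<^sup>2 * q w \<le> q w0" using w0max by metis
    moreover have "c\<^sup>2 * (w \<bullet> w) = 1" using False
      by (simp add: c_def dot_square_norm power2_eq_square field_simps)
    ultimately have "c\<^sup>2 * q w \<le> c\<^sup>2 * (q w0 * (w \<bullet> w))" by (simp add: algebra_simps)
    moreover have "c\<^sup>2 > 0" using False by (simp add: c_def)
    ultimately show ?thesis by simp
  qed
  moreover have "w0 \<in> W" "w0 \<bullet> w0 = 1" using w0K by (auto simp: K_def dot_square_norm)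
  ultimately show ?thesis using that unfolding q_def by blast
qed

lemma nonneg_dominated_by_square:
  fixes N c :: real
  assumes "0 \<le> N" "\<And>s. 2 * s * N \<le> s\<^sup>2 * c"
  shows "N = 0"
proof (rule ccontr)
  assume "N \<noteq> 0"
  then have Np: "N > 0" using assms(1) by simp
  define s where "s = N / (\<bar>c\<bar> + 1)"
  have sp: "s > 0" using Np by (simp add: s_def add_pos_nonneg)
  have "2 * N \<le> s * c" using assms(2)[of s] sp by (simp add: power2_eq_square mult.assoc)
  moreover have "c / (\<bar>c\<bar> + 1) < 1" using abs_ge_self[of c] by (simp add: divide_less_eq add_pos_nonneg)
  then have "N * (c / (\<bar>c\<bar> + 1)) < N * 1" using Np by (intro mult_strict_left_mono)
  then have "s * c < N" by (simp add: s_def)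
  ultimately show False using Np by simp
qed

text \<open>
  A unit maximiser w0 of the quadratic form of a symmetric X on an X-invariant subspace is an
  eigenvector: perturbing w0 in the direction z = Xw0 - a w0 (orthogonal to w0) would otherwise
  increase the Rayleigh quotient to first order.
\<close>
lemma quadratic_form_maximiser_eigenvector:
  fixes X :: "real^'n^'n"
  assumes sym: "transpose X = X" and W: "subspace W" and inv: "\<And>w. w \<in> W \<Longrightarrow> X *v w \<in> W"
    and w0: "w0 \<in> W" "w0 \<bullet> w0 = 1"
    and bound: "\<And>w. w \<in> W \<Longrightarrow> (X *v w) \<bullet> w \<le> a * (w \<bullet> w)"
    and a: "a = (X *v w0) \<bullet> w0"
  shows "X *v w0 = a *\<^sub>R w0"
proof -
  define z where "z = X *v w0 - a *\<^sub>R w0"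
  define N where "N = z \<bullet> z"
  have zW: "z \<in> W" unfolding z_def using W inv[OF w0(1)] w0(1)
    by (simp add: subspace_diff subspace_scale)
  have zw0: "w0 \<bullet> z = 0" "z \<bullet> w0 = 0"
    by (simp_all add: z_def inner_diff_left inner_diff_right w0(2) a inner_commute)
  have Xw0: "X *v w0 = z + a *\<^sub>R w0" by (simp add: z_def)
  have Xw0z: "(X *v w0) \<bullet> z = N" and Xzw0: "(X *v z) \<bullet> w0 = N"
    unfolding symmetric_inner[OF sym, of z w0] Xw0
    by (simp_all add: inner_add_left inner_add_right N_def zw0)
  have "2 * s * N \<le> s\<^sup>2 * (a * N - (X *v z) \<bullet> z)" for s
  proof -
    have "X *v (w0 + s *\<^sub>R z) = X *v w0 + s *\<^sub>R (X *v z)"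
      by (simp add: matrix_vector_right_distrib matrix_vector_mult_scaleR)
    then have "(X *v (w0 + s *\<^sub>R z)) \<bullet> (w0 + s *\<^sub>R z)
        = (X *v w0) \<bullet> w0 + s * ((X *v w0) \<bullet> z) + s * ((X *v z) \<bullet> w0) + s * s * ((X *v z) \<bullet> z)"
      by (simp add: inner_add_left inner_add_right algebra_simps)
    then have "(X *v (w0 + s *\<^sub>R z)) \<bullet> (w0 + s *\<^sub>R z) = a + 2 * s * N + s\<^sup>2 * ((X *v z) \<bullet> z)"
      unfolding Xw0z Xzw0 a[symmetric] by (simp add: power2_eq_square)
    moreover have "(w0 + s *\<^sub>R z) \<bullet> (w0 + s *\<^sub>R z) = 1 + s\<^sup>2 * N"
      using zw0 w0(2)
      by (simp add: inner_add_left inner_add_right N_def inner_commute power2_eq_square)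
    moreover have "w0 + s *\<^sub>R z \<in> W" using W w0(1) zW by (simp add: subspace_add subspace_scale)
    ultimately show ?thesis using bound[of "w0 + s *\<^sub>R z"] by (simp add: algebra_simps)
  qed
  then have "N = 0" by (intro nonneg_dominated_by_square) (simp_all add: N_def)
  then show ?thesis by (simp add: N_def z_def)
qed

lemma symmetric_invariant_subspace_eigenvector:
  fixes X :: "real^'n^'n"
  assumes sym: "transpose X = X" and W: "subspace W" and inv: "\<And>w. w \<in> W \<Longrightarrow> X *v w \<in> W"
    and w1: "w1 \<in> W" "w1 \<noteq> 0"
  obtains w a where "w \<in> W" "w \<noteq> 0" "X *v w = a *\<^sub>R w"
proof -
  obtain w0 where w0: "w0 \<in> W" "w0 \<bullet> w0 = 1"
    and bound: "\<And>w. w \<in> W \<Longrightarrow> (X *v w) \<bullet> w \<le> ((X *v w0) \<bullet> w0) * (w \<bullet> w)"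
    using quadratic_form_maximum[OF W w1] by blast
  have "w0 \<noteq> 0" using w0(2) by auto
  moreover have "X *v w0 = ((X *v w0) \<bullet> w0) *\<^sub>R w0"
    by (rule quadratic_form_maximiser_eigenvector[OF sym W inv w0 bound refl])
  ultimately show ?thesis by (rule that[OF w0(1)])
qed

lemma closest_point_zero_orthogonal:
  fixes X :: "real^'n^'n"
  assumes "closest_point (eigenspace X l) v = 0" "X *v u = l *\<^sub>R u"
  shows "v \<bullet> u = 0"
proof -
  let ?S = "eigenspace X l"
  have sub: "subspace ?S" by (rule eigenspace_subspace)
  note cl = closed_subspace[OF sub] and cv = subspace_imp_convex[OF sub]
  have z: "0 \<in> ?S" using sub by (rule subspace_0)
  have u: "u \<in> ?S" using assms(2) by (simp add: eigenspace_def)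
  have uS: "u \<in> ?S" "- u \<in> ?S" using subspace_neg[OF sub u] u by simp_all
  have all: "\<forall>y\<in>?S. dist v 0 \<le> dist v y"
    using closest_point_exists(2)[OF cl, of v] z assms(1) by auto
  have "inner (v - 0) (u - 0) \<le> 0" "inner (v - 0) (- u - 0) \<le> 0"
    by (rule any_closest_point_dot[OF cv cl z uS(1) all], rule any_closest_point_dot[OF cv cl z uS(2) all])
  then show ?thesis by simp
qed

text \<open>
  For symmetric X and v \<noteq> 0 the set of eigenvalues supporting v is nonempty: otherwise v lies
  in the orthogonal complement of all eigenvectors, a nonzero X-invariant subspace which would
  contain an eigenvector orthogonal to itself.
\<close>
lemma supp_eig_nonempty:
  fixes X :: "real^'n^'n"
  assumes sym: "transpose X = X" and v: "v \<noteq> 0"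
  shows "supp_eig X v \<noteq> {}"
proof
  assume empty: "supp_eig X v = {}"
  define W where "W = {w. \<forall>l u. X *v u = l *\<^sub>R u \<longrightarrow> w \<bullet> u = 0}"
  have "subspace W"
    unfolding subspace_def W_def by (fastforce simp: inner_add_left)
  moreover have "X *v w \<in> W" if "w \<in> W" for w
    using that unfolding W_def by (auto simp: symmetric_inner[OF sym])
  moreover have "v \<bullet> u = 0" if "X *v u = l *\<^sub>R u" for l u
  proof (cases "u = 0")
    case False
    then have "closest_point (eigenspace X l) v = 0"
      using empty that unfolding supp_eig_def by blast
    then show ?thesis using closest_point_zero_orthogonal that by blast
  qed simp
  then have "v \<in> W" unfolding W_def by blast
  ultimately obtain w a where "w \<in> W" "w \<noteq> 0" "X *v w = a *\<^sub>R w"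
    using symmetric_invariant_subspace_eigenvector[OF sym _ _ _ v] by blast
  then have "w \<bullet> w = 0" unfolding W_def by blast
  with \<open>w \<noteq> 0\<close> show False by simp
qed

section \<open>Negation and the Hilbert-Mumford bound\<close>

lemma matrix_vector_mult_uminus: "(- X) *v w = - (X *v w)"
  for X :: "real^'n^'m"
  by (simp add: vec_eq_iff matrix_vector_mult_def sum_negf)

lemma supp_eig_uminus: "supp_eig (- X) v = uminus ` supp_eig X v"
proof -
  have eig: "(- X) *v w = l *\<^sub>R w \<longleftrightarrow> X *v w = (- l) *\<^sub>R w" for w l
    using minus_equation_iff[of "X *v w" "l *\<^sub>R w"] by (simp add: matrix_vector_mult_uminus eq_commute)
  have "l \<in> supp_eig (- X) v \<longleftrightarrow> - l \<in> supp_eig X v" for l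
    unfolding supp_eig_def eigenspace_def mem_Collect_eq eig ..
  then show ?thesis by (force simp: image_iff)
qed

lemma mu_X_uminus:
  fixes X :: "real^'n^'n"
  assumes sym: "transpose X = X" and v: "v \<noteq> 0"
  shows "mu_X (- X) v = - lambda_X X v"
proof -
  have "finite (supp_eig X v)"
    by (rule finite_subset[OF _ symmetric_eigenvalues_finite[OF sym]]) (auto simp: supp_eig_def)
  then show ?thesis
    unfolding mu_X_def lambda_X_def supp_eig_uminus
    using supp_eig_nonempty[OF sym v] by simp
qed

lemma mnorm_uminus: "mnorm (- X) = mnorm X"
  by (simp add: mnorm_def minner_sum)

lemma uminus_P_tilde_in_lie_P:
  fixes G :: "(real^'n^'n) set"
  assumes "GL_subgroup G"
    and "closedin (top_of_set {A :: real^'n^'n. invertible A}) G"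
    and "\<forall>A\<in>G. transpose A \<in> G"
    and X: "X \<in> P_tilde G v"
  shows "- X \<in> lie_P G"
proof -
  have "transpose X = X" by (rule P_tilde_symmetric[OF assms])
  then have "transpose (- X) = - X" by (simp add: transpose_def vec_eq_iff)
  moreover have "(-1) *\<^sub>R X \<in> lie_alg G" using X by (intro lie_scale) (simp add: P_tilde_def)
  ultimately show ?thesis by (simp add: lie_P_def)
qed

theorem proposition2p6:
  fixes G :: "(real^'n^'n) set" and v :: "real^'n"
  assumes "GL_subgroup G"
    and "closedin (top_of_set {A :: real^'n^'n. invertible A}) G"
    and "connected G"
    and "\<forall>A\<in>G. transpose A \<in> G"
    and "\<not> compact G"
    and "v \<noteq> 0"
  shows "lambda_minus G v \<ge> - HM G v"
  unfolding lambda_minus_def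
proof (rule Inf_greatest, clarify)
  fix X assume X: "X \<in> P_tilde G v" and unit: "mnorm X = 1"
  have "- X \<in> lie_P G" by (rule uminus_P_tilde_in_lie_P[OF assms(1,2,4) X])
  moreover have "mnorm (- X) = 1" using unit by (simp add: mnorm_uminus)
  ultimately have "ereal (mu_X (- X) v) \<le> HM G v"
    unfolding HM_def by (blast intro: Sup_upper)
  moreover have "mu_X (- X) v = - lambda_X X v"
    by (rule mu_X_uminus[OF P_tilde_symmetric[OF assms(1,2,4) X] assms(6)])
  ultimately have "- ereal (lambda_X X v) \<le> HM G v" by simp
  then show "- HM G v \<le> ereal (lambda_X X v)"
    by (metis ereal_minus_le_minus ereal_uminus_uminus)
qed

end
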